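(* For all sufficiently large $K>0$ the following hold: for every $x\in X$, $\mathcal L_x(\Lambda_K^x)\subset\Lambda_{\zeta K}^{fx}$; and there is a constant $M=M(K)<\infty$ such that for every $x\in X$, the diameter of $\mathcal L_x(\Lambda_K^x)$ with respect to the Hilbert projective metric of the cone $\Lambda_K^{fx}$ is at most $M$.
   Context: Standing setting. $X$ and $Y$ are compact connected Riemannian manifolds, $X\times Y$ has the metric $d((x,y),(x',y'))=d_X(x,x')+d_Y(y,y')$. $F(x,y)=(f(x),g_x(y))$ is a skew product which is a Lipschitz local homeomorphism; $Y_x=\{x\}\times Y$ is identified with $Y$. $f$ is uniformly expanding: there are $\gamma>1$, $\delta_f>0$ with $d_X(fx,fx')\ge\gamma d_X(x,x')$ whenever $d_X(x,x')\le\delta_f$. Every $y$ has exactly $d$ preimages under each $g_x$. There is a continuous function $L(\cdot,\cdot)$ such that each $z$ has a neighbourhood $U_z$ on which $F$ is injective and the inverse of $F|_{U_z}$ is $L(z)$-Lipschitz on $F(U_z)$. There are $L\ge1$ and open $\mathcal A\subset X\times Y$ with: (A1) $L(z)\le L$ on $\mathcal A$ and $L(z)<\gamma^{-1}$ off $\mathcal A$; (A2) a finite cover $\mathcal U$ of $X\times Y$ by open sets on which $F$ is injective, with $\mathcal A$ covered by $q<d$ elements of $\mathcal U$ and each element of $\mathcal U$ meeting at most one curve of $F^{-1}(c)$ for every distance-minimizing geodesic $c$. The potential $\varphi$ is $\alpha$-Hölder ($0<\alpha<1$), $|\varphi|_\alpha=\sup_{z\ne z'}|\varphi(z)-\varphi(z')|/d(z,z')^\alpha$,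 satisfying (P): $\sup\varphi-\inf\varphi<\varepsilon_\varphi$ and $|e^\varphi|_\alpha<\varepsilon_\varphi e^{\inf\varphi}$, where $\varepsilon_\varphi>0$ satisfies $s:=e^{\varepsilon_\varphi}\frac{(d-q)\gamma^{-\alpha}+qL^\alpha}{d}<1$ and $\zeta:=s+2s\varepsilon_\varphi\,\mathrm{diam}(Y)^\alpha<1$. Fiberwise operator: $\mathcal L_x\colon C(Y_x)\to C(Y_{fx})$, $\mathcal L_x\psi(y)=\sum_{\bar y\in g_x^{-1}(y)}e^{\varphi(x,\bar y)}\psi(\bar y)$. Cones: for $K>0$ and $x\in X$, $\Lambda_K^x=\{\psi\colon Y_x\to(0,\infty)\ \alpha\text{-Hölder}: |\psi|_\alpha\le K\inf\psi\}\cup\{0\}$. For a cone $\Lambda$, write $\phi\preceq\psi$ iff $\psi-\phi\in\Lambda\cup\{0\}$; $A(\phi,\psi)=\sup\{t>0:t\phi\preceq\psi\}$, $B(\phi,\psi)=\inf\{t>0:\psi\preceq t\phi\}$, and the Hilbert projective metric is $\Theta(\phi,\psi)=\log(B/A)$. *)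

theory Defs
  imports "HOL-Analysis.Analysis"
begin

definition pdist :: "('x::metric_space \<times> 'y::metric_space) \<Rightarrow> ('x \<times> 'y) \<Rightarrow> real" where
  "pdist z w = dist (fst z) (fst w) + dist (snd z) (snd w)"

definition holder :: "real \<Rightarrow> ('a \<Rightarrow> 'a \<Rightarrow> real) \<Rightarrow> ('a \<Rightarrow> real) \<Rightarrow> bool" where
  "holder \<alpha> D h \<longleftrightarrow> (\<exists>C. \<forall>a b. \<bar>h a - h b\<bar> \<le> C * D a b powr \<alpha>)"

definition holder_semi :: "real \<Rightarrow> ('a \<Rightarrow> 'a \<Rightarrow> real) \<Rightarrow> ('a \<Rightarrow> real) \<Rightarrow> real" where
  "holder_semi \<alpha> D h = Sup (insert 0 {\<bar>h a - h b\<bar> / D a b powr \<alpha> | a b. a \<noteq> b})"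

definition min_geodesic :: "('a \<Rightarrow> 'a \<Rightarrow> real) \<Rightarrow> (real \<Rightarrow> 'a) \<Rightarrow> real \<Rightarrow> bool" where
  "min_geodesic D c l \<longleftrightarrow> 0 \<le> l \<and> (\<forall>s\<in>{0..l}. \<forall>t\<in>{0..l}. D (c s) (c t) = \<bar>s - t\<bar>)"

definition geodesic_space :: "('a \<Rightarrow> 'a \<Rightarrow> real) \<Rightarrow> bool" where
  "geodesic_space D \<longleftrightarrow> (\<forall>a b. \<exists>c l. min_geodesic D c l \<and> c 0 = a \<and> c l = b)"

definition local_homeo :: "('a::topological_space \<Rightarrow> 'a) \<Rightarrow> bool" where
  "local_homeo F \<longleftrightarrow> (\<forall>z. \<exists>U G. open U \<and> z \<in> U \<and> open (F ` U) \<and> homeomorphism U (F ` U) F G)"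

definition transfer :: "('x \<Rightarrow> 'y \<Rightarrow> 'y) \<Rightarrow> ('x \<times> 'y \<Rightarrow> real) \<Rightarrow> 'x \<Rightarrow> ('y \<Rightarrow> real) \<Rightarrow> ('y \<Rightarrow> real)" where
  "transfer g \<phi> x \<psi> = (\<lambda>y. \<Sum>yb\<in>{yb. g x yb = y}. exp (\<phi> (x, yb)) * \<psi> yb)"

text \<open>The cone Lambda_K (on Y, identified with every fibre Y_x).\<close>
definition hcone :: "real \<Rightarrow> real \<Rightarrow> ('y::metric_space \<Rightarrow> real) set" where
  "hcone \<alpha> K = {\<psi>. (\<forall>y. 0 < \<psi> y) \<and> holder \<alpha> dist \<psi> \<and>
                    holder_semi \<alpha> dist \<psi> \<le> K * Inf (range \<psi>)} \<union> {\<lambda>_. 0}"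

definition cone_le :: "('a \<Rightarrow> real) set \<Rightarrow> ('a \<Rightarrow> real) \<Rightarrow> ('a \<Rightarrow> real) \<Rightarrow> bool" where
  "cone_le C \<phi> \<psi> \<longleftrightarrow> (\<lambda>y. \<psi> y - \<phi> y) \<in> C \<union> {\<lambda>_. 0}"

definition cone_A :: "('a \<Rightarrow> real) set \<Rightarrow> ('a \<Rightarrow> real) \<Rightarrow> ('a \<Rightarrow> real) \<Rightarrow> ereal" where
  "cone_A C \<phi> \<psi> = Sup (ereal ` {t. 0 < t \<and> cone_le C (\<lambda>y. t * \<phi> y) \<psi>})"

definition cone_B :: "('a \<Rightarrow> real) set \<Rightarrow> ('a \<Rightarrow> real) \<Rightarrow> ('a \<Rightarrow> real) \<Rightarrow> ereal" where
  "cone_B C \<phi> \<psi> = Inf (ereal ` {t. 0 < t \<and> cone_le C \<psi> (\<lambda>y. t * \<phi> y)})"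

definition hilbert_metric :: "('a \<Rightarrow> real) set \<Rightarrow> ('a \<Rightarrow> real) \<Rightarrow> ('a \<Rightarrow> real) \<Rightarrow> ereal" where
  "hilbert_metric C \<phi> \<psi> =
     (let A = cone_A C \<phi> \<psi>; B = cone_B C \<phi> \<psi> in
      if 0 < A \<and> A < \<infinity> \<and> 0 < B \<and> B < \<infinity>
      then ereal (ln (real_of_ereal B / real_of_ereal A)) else \<infinity>)"

end

theory Submission
  imports Defs
begin

text \<open>
  For \<open>y, y'\<close> in \<open>Y\<close>, lifting a geodesic from \<open>y\<close> to \<open>y'\<close> through \<open>g x\<close> matches the \<open>d\<close>
  preimages of \<open>y\<close> with those of \<open>y'\<close>. A lift that avoids \<open>\<A>\<close> contracts by \<open>\<gamma>\<^sup>-\<^sup>1\<close>, the others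
  expand by at most \<open>L\<close>; as every element of the cover of \<open>\<A>\<close> meets only one component of the
  preimage of the geodesic, at most \<open>q\<close> lifts enter \<open>\<A>\<close>. Comparing the matched terms of
  \<open>\<L>\<^sub>x \<psi> y\<close> and \<open>\<L>\<^sub>x \<psi> y'\<close>, with the small oscillation of \<open>\<phi>\<close>, bounds the Hoelder
  constant of \<open>\<L>\<^sub>x \<psi>\<close> by \<open>\<zeta> K\<close> times its infimum.

  The cone \<open>\<Lambda>\<^bsub>\<zeta>K\<^esub>\<close> with \<open>\<zeta> < 1\<close> has bounded diameter in \<open>\<Lambda>\<^bsub>K\<^esub>\<close>: for nonzero \<open>u, v\<close> in
  it, \<open>v - t\<^sub>0 u\<close> and \<open>t\<^sub>1 u - v\<close> lie in \<open>\<Lambda>\<^bsub>K\<^esub>\<close> for a ratio \<open>t\<^sub>1 / t\<^sub>0\<close> independent of \<open>u, v\<close>.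
\<close>

section \<open>Hoelder cones and their Hilbert metric\<close>

lemma holder_semi_bound:
  fixes D :: "'a \<Rightarrow> 'a \<Rightarrow> real"
  assumes H: "holder \<alpha> D u" and Dpos: "\<And>a b. a \<noteq> b \<Longrightarrow> D a b > 0" and D0: "\<And>a. D a a = 0"
  shows "\<bar>u a - u b\<bar> \<le> holder_semi \<alpha> D u * D a b powr \<alpha>"
proof (cases "a = b")
  case True
  then show ?thesis using D0 by simp
next
  case False
  obtain C where C: "\<And>a b. \<bar>u a - u b\<bar> \<le> C * D a b powr \<alpha>"
    using H unfolding holder_def by blast
  define S where "S = insert 0 {\<bar>u a - u b\<bar> / D a b powr \<alpha> | a b. a \<noteq> b}"
  have "bdd_above S"
    unfolding bdd_above_def
  proof (intro exI[of _ "max 0 C"] ballI)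
    fix r assume "r \<in> S"
    then consider "r = 0" | a b where "a \<noteq> b" "r = \<bar>u a - u b\<bar> / D a b powr \<alpha>"
      unfolding S_def by blast
    then show "r \<le> max 0 C"
    proof cases
      case 2
      then have "r \<le> C" using C[of a b] Dpos[of a b] by (simp add: divide_le_eq)
      then show ?thesis by simp
    qed simp
  qed
  moreover have "\<bar>u a - u b\<bar> / D a b powr \<alpha> \<in> S" using False unfolding S_def by blast
  ultimately have "\<bar>u a - u b\<bar> / D a b powr \<alpha> \<le> Sup S" by (rule cSup_upper[rotated])
  then show ?thesis
    using Dpos[OF False] unfolding holder_semi_def S_def[symmetric] by (simp add: divide_le_eq)
qed

lemma holder_semi_le:
  fixes D :: "'a \<Rightarrow> 'a \<Rightarrow> real"
  assumes Dpos: "\<And>a b. a \<noteq> b \<Longrightarrow> D a b > 0" and "M \<ge> 0"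
    and B: "\<And>a b. a \<noteq> b \<Longrightarrow> \<bar>u a - u b\<bar> \<le> M * D a b powr \<alpha>"
  shows "holder_semi \<alpha> D u \<le> M"
  unfolding holder_semi_def
proof (rule cSup_least)
  fix r assume "r \<in> insert 0 {\<bar>u a - u b\<bar> / D a b powr \<alpha> | a b. a \<noteq> b}"
  then consider "r = 0" | a b where "a \<noteq> b" "r = \<bar>u a - u b\<bar> / D a b powr \<alpha>" by blast
  then show "r \<le> M"
  proof cases
    case 2
    then show ?thesis using B[of a b] Dpos[of a b] by (simp add: divide_le_eq)
  qed (use \<open>M \<ge> 0\<close> in simp)
qed simp

lemma abs_exp_diff_le:
  fixes u v S :: real
  assumes "u \<le> S" "v \<le> S"
  shows "\<bar>exp u - exp v\<bar> \<le> exp S * \<bar>u - v\<bar>"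
proof -
  have *: "exp a - exp b \<le> exp S * (a - b)" if "b \<le> a" "a \<le> S" for a b :: real
  proof -
    have "exp a - exp b = exp a * (1 - exp (b - a))" by (simp add: exp_diff field_simps)
    also have "\<dots> \<le> exp a * (a - b)"
      using exp_ge_add_one_self[of "b - a"] by (intro mult_left_mono) (linarith, simp)
    also have "\<dots> \<le> exp S * (a - b)" using that by (intro mult_right_mono) auto
    finally show ?thesis .
  qed
  show ?thesis
    using *[of v u] *[of u v] assms by (cases "v \<le> u") auto
qed

lemma holder_exp:
  assumes "holder \<alpha> D \<phi>" and "\<And>z. \<phi> z \<le> S"
  shows "holder \<alpha> D (\<lambda>z. exp (\<phi> z))"
proof -
  obtain C where C: "\<And>a b. \<bar>\<phi> a - \<phi> b\<bar> \<le> C * D a b powr \<alpha>"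
    using assms(1) unfolding holder_def by blast
  have "\<bar>exp (\<phi> a) - exp (\<phi> b)\<bar> \<le> exp S * C * D a b powr \<alpha>" for a b
  proof -
    have "\<bar>exp (\<phi> a) - exp (\<phi> b)\<bar> \<le> exp S * \<bar>\<phi> a - \<phi> b\<bar>"
      by (rule abs_exp_diff_le) (use assms(2) in auto)
    also have "\<dots> \<le> exp S * (C * D a b powr \<alpha>)" using C by (intro mult_left_mono) auto
    finally show ?thesis by (simp add: mult.assoc)
  qed
  then show ?thesis unfolding holder_def by blast
qed

lemma holder_bdd_range:
  fixes D :: "'a \<Rightarrow> 'a \<Rightarrow> real"
  assumes "holder \<alpha> D u" and "\<And>a b. D a b \<le> B" "\<And>a b. 0 \<le> D a b" and "0 < \<alpha>"
  shows "bdd_above (range u)" "bdd_below (range u)"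
proof -
  obtain C where C: "\<And>a b. \<bar>u a - u b\<bar> \<le> C * D a b powr \<alpha>"
    using assms(1) unfolding holder_def by blast
  have "\<bar>u a - u b\<bar> \<le> \<bar>C\<bar> * B powr \<alpha>" for a b
  proof -
    have "C * D a b powr \<alpha> \<le> \<bar>C\<bar> * D a b powr \<alpha>" by (intro mult_right_mono) auto
    also have "\<dots> \<le> \<bar>C\<bar> * B powr \<alpha>"
      using assms(2-4) by (intro mult_left_mono powr_mono2) auto
    finally show ?thesis using C[of a b] by linarith
  qed
  then have "u a \<le> u z + \<bar>C\<bar> * B powr \<alpha>" "u z - \<bar>C\<bar> * B powr \<alpha> \<le> u a" for a z
    by (smt (verit))+
  then show "bdd_above (range u)" "bdd_below (range u)"
    by (auto intro!: bdd_aboveI bdd_belowI)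
qed

lemma hcone_memI:
  fixes u :: "'y::metric_space \<Rightarrow> real"
  assumes "K \<ge> 0" "c > 0" and lower: "\<And>y. c \<le> u y"
    and Hoelder: "\<And>a b. \<bar>u a - u b\<bar> \<le> K * c * dist a b powr \<alpha>"
  shows "u \<in> hcone \<alpha> K"
proof -
  have "holder_semi \<alpha> dist u \<le> K * c"
    by (rule holder_semi_le) (use assms in auto)
  also have "K * c \<le> K * Inf (range u)"
    using lower by (intro mult_left_mono cInf_greatest) (auto simp: assms)
  finally show ?thesis
    using Hoelder lower \<open>c > 0\<close> unfolding hcone_def holder_def by (auto intro: less_le_trans)
qed

lemma hcone_bounds:
  fixes \<psi> :: "'y::metric_space \<Rightarrow> real"
  assumes "\<psi> \<in> hcone \<alpha> K" "\<psi> \<noteq> (\<lambda>_. 0)" and "K \<ge> 0" "\<alpha> > 0" and "bounded (UNIV::'y set)"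
  defines "m \<equiv> Inf (range \<psi>)"
  shows "0 < m" "\<And>y. m \<le> \<psi> y" "\<And>y. \<psi> y \<le> m + K * m * diameter (UNIV::'y set) powr \<alpha>"
    "\<And>a b. \<bar>\<psi> a - \<psi> b\<bar> \<le> K * m * dist a b powr \<alpha>"
proof -
  define D where "D = diameter (UNIV::'y set)"
  have pos: "\<And>y. 0 < \<psi> y" and hol: "holder \<alpha> dist \<psi>" and semi: "holder_semi \<alpha> dist \<psi> \<le> K * m"
    using assms(1,2) unfolding hcone_def m_def by auto
  show lower: "m \<le> \<psi> y" for y
    unfolding m_def using pos by (intro cInf_lower bdd_belowI[of _ 0]) (auto intro: less_imp_le)
  have m0: "0 \<le> m" unfolding m_def using pos by (intro cInf_greatest) (auto intro: less_imp_le)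
  show Hoelder: "\<bar>\<psi> a - \<psi> b\<bar> \<le> K * m * dist a b powr \<alpha>" for a b
    using holder_semi_bound[OF hol, of a b] mult_right_mono[OF semi, of "dist a b powr \<alpha>"] by simp
  have upper: "\<psi> y \<le> m + K * m * D powr \<alpha>" for y
  proof -
    have "\<psi> y - K * m * D powr \<alpha> \<le> \<psi> z" for z
    proof -
      have "dist y z powr \<alpha> \<le> D powr \<alpha>"
        unfolding D_def using assms(4,5) by (intro powr_mono2 diameter_bounded_bound) auto
      then have "K * m * dist y z powr \<alpha> \<le> K * m * D powr \<alpha>"
        using assms(3) m0 by (intro mult_left_mono) auto
      then show ?thesis using Hoelder[of y z] by linarith
    qed
    then have "\<psi> y - K * m * D powr \<alpha> \<le> m" unfolding m_def by (intro cInf_greatest) auto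
    then show ?thesis by simp
  qed
  then show "\<psi> y \<le> m + K * m * diameter (UNIV::'y set) powr \<alpha>" for y by (simp add: D_def)
  show "0 < m"
    using upper[of undefined] pos[of undefined] m0 by (cases "m = 0") auto
qed

lemma hcone_nonneg: "w \<in> hcone \<alpha> K \<Longrightarrow> 0 \<le> w y"
  unfolding hcone_def by (auto intro: less_imp_le)

lemma hcone_diff_memI:
  fixes p q :: "'y::metric_space \<Rightarrow> real"
  assumes "K \<ge> 0" "0 < \<zeta> * (mp + mq)"
    and "\<And>a b. \<bar>p a - p b\<bar> \<le> \<zeta> * K * mp * dist a b powr \<alpha>"
    and "\<And>a b. \<bar>q a - q b\<bar> \<le> \<zeta> * K * mq * dist a b powr \<alpha>"
    and "\<And>y. \<zeta> * (mp + mq) \<le> p y - q y"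
  shows "(\<lambda>y. p y - q y) \<in> hcone \<alpha> K"
proof (rule hcone_memI[OF assms(1,2,5)])
  fix a b
  have "\<bar>(p a - q a) - (p b - q b)\<bar> \<le> \<bar>p a - p b\<bar> + \<bar>q a - q b\<bar>" by linarith
  also have "\<dots> \<le> K * (\<zeta> * (mp + mq)) * dist a b powr \<alpha>"
    using assms(3,4)[of a b] by (simp add: algebra_simps)
  finally show "\<bar>(p a - q a) - (p b - q b)\<bar> \<le> K * (\<zeta> * (mp + mq)) * dist a b powr \<alpha>" .
qed

lemma hilbert_metric_le_ln:
  fixes C :: "('a \<Rightarrow> real) set"
  assumes nonneg: "\<And>w y. w \<in> C \<Longrightarrow> 0 \<le> w y"
    and "0 < u y0" "0 < v y0" "0 < t0" "0 < t1"
    and below: "cone_le C (\<lambda>y. t0 * u y) v" and above: "cone_le C v (\<lambda>y. t1 * u y)"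
  shows "hilbert_metric C u v \<le> ereal (ln (t1 / t0))"
proof -
  have nonneg': "0 \<le> w y" if "w \<in> C \<union> {\<lambda>_. 0}" for w y using that nonneg by auto
  define A where "A = cone_A C u v"
  define B where "B = cone_B C u v"
  have A_ge: "ereal t0 \<le> A"
    unfolding A_def cone_A_def using below \<open>0 < t0\<close> by (intro Sup_upper) auto
  have A_le: "A \<le> ereal (v y0 / u y0)"
    unfolding A_def cone_A_def
  proof (rule Sup_least)
    fix r assume "r \<in> ereal ` {t. 0 < t \<and> cone_le C (\<lambda>y. t * u y) v}"
    then obtain t where "r = ereal t" "cone_le C (\<lambda>y. t * u y) v" by blast
    then show "r \<le> ereal (v y0 / u y0)"
      using nonneg'[of "\<lambda>y. v y - t * u y" y0] \<open>0 < u y0\<close>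
      unfolding cone_le_def by (simp add: le_divide_eq)
  qed
  have B_le: "B \<le> ereal t1"
    unfolding B_def cone_B_def using above \<open>0 < t1\<close> by (intro Inf_lower) auto
  have B_ge: "ereal (v y0 / u y0) \<le> B"
    unfolding B_def cone_B_def
  proof (rule Inf_greatest)
    fix r assume "r \<in> ereal ` {t. 0 < t \<and> cone_le C v (\<lambda>y. t * u y)}"
    then obtain t where "r = ereal t" "cone_le C v (\<lambda>y. t * u y)" by blast
    then show "ereal (v y0 / u y0) \<le> r"
      using nonneg'[of "\<lambda>y. t * u y - v y" y0] \<open>0 < u y0\<close>
      unfolding cone_le_def by (simp add: divide_le_eq)
  qed
  obtain a where a: "A = ereal a" using A_ge A_le by (cases A) auto
  obtain b where b: "B = ereal b" using B_le B_ge by (cases B) auto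
  have "0 < v y0 / u y0" using assms(2,3) by simp
  then have ab: "t0 \<le> a" "0 < b" "b \<le> t1" using A_ge B_ge B_le a b by auto
  have "hilbert_metric C u v = ereal (ln (b / a))"
    unfolding hilbert_metric_def A_def[symmetric] B_def[symmetric] Let_def
    using a b ab \<open>0 < t0\<close> by simp
  also have "ln (b / a) \<le> ln (t1 / t0)"
    using ab \<open>0 < t0\<close> by (intro ln_mono frac_le) auto
  finally show ?thesis by simp
qed

text \<open>The gap condition is what makes the lower bound of \<open>a p - b q\<close> exceed \<open>\<zeta>\<close> times the sum of
  the Hoelder scales \<open>a inf p\<close> and \<open>b inf q\<close>, using \<open>q \<le> (1 + \<zeta> K diam\<^sup>\<alpha>) inf q\<close>.\<close>

lemma hcone_scaled_diff_mem:
  fixes p q :: "'y::metric_space \<Rightarrow> real"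
  assumes p: "p \<in> hcone \<alpha> (\<zeta> * K)" "p \<noteq> (\<lambda>_. 0)" and q: "q \<in> hcone \<alpha> (\<zeta> * K)" "q \<noteq> (\<lambda>_. 0)"
    and "0 \<le> K" "0 < \<zeta>" "0 < \<alpha>" and bdd: "bounded (UNIV::'y set)" and "0 < a" "0 < b"
    and gap: "b * Inf (range q) * (1 + \<zeta> + \<zeta> * K * diameter (UNIV::'y set) powr \<alpha>)
      \<le> a * Inf (range p) * (1 - \<zeta>)"
  shows "(\<lambda>y. a * p y - b * q y) \<in> hcone \<alpha> K"
proof -
  define mp where "mp = Inf (range p)"
  define mq where "mq = Inf (range q)"
  have "0 \<le> \<zeta> * K" using assms(5,6) by simp
  note bp = hcone_bounds[OF p \<open>0 \<le> \<zeta> * K\<close> \<open>0 < \<alpha>\<close> bdd, folded mp_def, unfolded mult.assoc[of \<zeta>]]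
  note bq = hcone_bounds[OF q \<open>0 \<le> \<zeta> * K\<close> \<open>0 < \<alpha>\<close> bdd, folded mq_def, unfolded mult.assoc[of \<zeta>]]
  show ?thesis
  proof (rule hcone_diff_memI[where mp = "a * mp" and mq = "b * mq"])
    show "\<bar>a * p x - a * p y\<bar> \<le> \<zeta> * K * (a * mp) * dist x y powr \<alpha>" for x y
      using mult_left_mono[OF bp(4)[of x y], of a] \<open>0 < a\<close>
      by (simp add: abs_mult right_diff_distrib[symmetric] mult_ac)
    show "\<bar>b * q x - b * q y\<bar> \<le> \<zeta> * K * (b * mq) * dist x y powr \<alpha>" for x y
      using mult_left_mono[OF bq(4)[of x y], of b] \<open>0 < b\<close>
      by (simp add: abs_mult right_diff_distrib[symmetric] mult_ac)
    show "\<zeta> * (a * mp + b * mq) \<le> a * p y - b * q y" for y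
    proof -
      have "a * mp \<le> a * p y" using bp(2)[of y] \<open>0 < a\<close> by simp
      moreover have "b * q y \<le> b * mq * (1 + \<zeta> * K * diameter (UNIV::'y set) powr \<alpha>)"
        using mult_left_mono[OF bq(3)[of y], of b] \<open>0 < b\<close> by (simp add: algebra_simps)
      ultimately show ?thesis using gap by (simp add: mp_def mq_def algebra_simps)
    qed
  qed (use bp(1) bq(1) \<open>0 < a\<close> \<open>0 < b\<close> assms(5,6) in \<open>auto intro!: mult_pos_pos add_pos_pos\<close>)
qed

lemma hilbert_metric_hcone_le:
  fixes u v :: "'y::metric_space \<Rightarrow> real"
  assumes u: "u \<in> hcone \<alpha> (\<zeta> * K)" "u \<noteq> (\<lambda>_. 0)" and v: "v \<in> hcone \<alpha> (\<zeta> * K)" "v \<noteq> (\<lambda>_. 0)"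
    and "0 < K" "0 < \<zeta>" "\<zeta> < 1" "0 < \<alpha>" and bdd: "bounded (UNIV::'y set)"
  shows "hilbert_metric (hcone \<alpha> K) u v
           \<le> ereal (2 * ln ((1 + \<zeta> + \<zeta> * K * diameter (UNIV::'y set) powr \<alpha>) / (1 - \<zeta>)))"
proof -
  define R where "R = 1 + \<zeta> + \<zeta> * K * diameter (UNIV::'y set) powr \<alpha>"
  define mu where "mu = Inf (range u)"
  define mv where "mv = Inf (range v)"
  have "0 < mu" "0 < mv" "0 < u undefined" "0 < v undefined"
    using hcone_bounds(1,2)[OF u _ \<open>0 < \<alpha>\<close> bdd] hcone_bounds(1,2)[OF v _ \<open>0 < \<alpha>\<close> bdd] assms(5,6)
    by (fastforce simp: mu_def mv_def intro: less_le_trans)+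
  have "0 < R" "0 < 1 - \<zeta>" using assms(5-7) by (auto simp: R_def intro!: add_pos_nonneg)
  define t0 where "t0 = (1 - \<zeta>) * mv / (mu * R)"
  define t1 where "t1 = mv * R / (mu * (1 - \<zeta>))"
  have t: "0 < t0" "0 < t1" "t0 * mu * R = (1 - \<zeta>) * mv" "t1 * mu * (1 - \<zeta>) = mv * R"
    using \<open>0 < mu\<close> \<open>0 < mv\<close> \<open>0 < R\<close> \<open>0 < 1 - \<zeta>\<close> by (simp_all add: t0_def t1_def)
  have "(\<lambda>y. 1 * v y - t0 * u y) \<in> hcone \<alpha> K"
    using t(1,3) assms(5-8) by (intro hcone_scaled_diff_mem[OF v u _ _ _ bdd])
      (simp_all add: R_def mu_def mv_def mult_ac)
  moreover have "(\<lambda>y. t1 * u y - 1 * v y) \<in> hcone \<alpha> K"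
    using t(2,4) assms(5-8) by (intro hcone_scaled_diff_mem[OF u v _ _ _ bdd])
      (simp_all add: R_def mu_def mv_def mult_ac)
  ultimately have "hilbert_metric (hcone \<alpha> K) u v \<le> ereal (ln (t1 / t0))"
    using \<open>0 < u undefined\<close> \<open>0 < v undefined\<close> t(1,2)
    by (intro hilbert_metric_le_ln[of _ u undefined v] hcone_nonneg) (auto simp: cone_le_def)
  also have "t1 / t0 = (R / (1 - \<zeta>))\<^sup>2"
  proof -
    have "(mv * R / (mu * z)) / (z * mv / (mu * R)) = (R / z)\<^sup>2" if "z > 0" for z
      using that \<open>0 < mu\<close> \<open>0 < mv\<close> \<open>0 < R\<close> by (simp add: field_simps power2_eq_square)
    then show ?thesis using \<open>0 < 1 - \<zeta>\<close> by (simp add: t0_def t1_def)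
  qed
  also have "ln ((R / (1 - \<zeta>))\<^sup>2) = 2 * ln (R / (1 - \<zeta>))"
    using \<open>0 < R\<close> \<open>0 < 1 - \<zeta>\<close> by (simp add: ln_realpow)
  finally show ?thesis by (simp add: R_def)
qed

section \<open>The fibrewise transfer operator\<close>

lemma transfer_eq_sum_vimage: "transfer g \<phi> x \<psi> y = (\<Sum>b\<in>g x -` {y}. exp (\<phi> (x, b)) * \<psi> b)"
  by (simp add: transfer_def vimage_def)

lemma weighted_increment_le:
  fixes e \<psi> :: "'a \<Rightarrow> real"
  assumes "0 \<le> e a" "e a \<le> E" "0 \<le> \<psi> b" "\<psi> b \<le> M"
    and "\<bar>\<psi> a - \<psi> b\<bar> \<le> H\<psi> * r" "\<bar>e a - e b\<bar> \<le> He * r"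
  shows "\<bar>e a * \<psi> a - e b * \<psi> b\<bar> \<le> (E * H\<psi> + M * He) * r"
proof -
  have "e a * \<psi> a - e b * \<psi> b = e a * (\<psi> a - \<psi> b) + \<psi> b * (e a - e b)" by (simp add: algebra_simps)
  then have "\<bar>e a * \<psi> a - e b * \<psi> b\<bar> \<le> e a * \<bar>\<psi> a - \<psi> b\<bar> + \<psi> b * \<bar>e a - e b\<bar>"
    using assms(1,3) abs_triangle_ineq[of "e a * (\<psi> a - \<psi> b)" "\<psi> b * (e a - e b)"] by (simp add: abs_mult)
  also have "\<dots> \<le> E * (H\<psi> * r) + M * (He * r)"
    using assms by (intro add_mono mult_mono) (auto intro: order_trans[OF abs_ge_zero])
  finally show ?thesis by (simp add: algebra_simps)
qed

lemma sum_matched_diff_le: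
  fixes h :: "'a \<Rightarrow> real"
  assumes "bij_betw \<sigma> A B" "\<And>b. b \<in> A \<Longrightarrow> \<bar>h b - h (\<sigma> b)\<bar> \<le> Q * \<delta> b" "0 \<le> Q" "sum \<delta> A \<le> r"
  shows "\<bar>sum h A - sum h B\<bar> \<le> Q * r"
proof -
  have "\<bar>sum h A - sum h B\<bar> = \<bar>\<Sum>b\<in>A. h b - h (\<sigma> b)\<bar>"
    by (simp add: sum_subtractf sum.reindex_bij_betw[OF assms(1), of h])
  also have "\<dots> \<le> (\<Sum>b\<in>A. Q * \<delta> b)" using assms(2) by (intro order_trans[OF sum_abs] sum_mono)
  also have "\<dots> \<le> Q * r" using assms(3,4) by (simp add: sum_distrib_left[symmetric] mult_left_mono)
  finally show ?thesis .
qed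

text \<open>The factor \<open>2\<close> in \<open>\<zeta>\<close> absorbs \<open>1 + K Da \<le> 2 K Da\<close>, which is why \<open>K\<close> must be large.\<close>

lemma contraction_constant_le:
  fixes m d W \<epsilon> a K Da s :: real
  assumes "0 < m" "0 < d" "0 \<le> W" "0 \<le> \<epsilon>" "1 \<le> K * Da" "s = exp \<epsilon> * W / d"
  shows "(exp (a + \<epsilon>) * (K * m) + (m + K * m * Da) * (\<epsilon> * exp a)) * W
    \<le> (s + 2 * s * \<epsilon> * Da) * K * (d * exp a * m)"
proof -
  have W: "exp \<epsilon> * W = s * d" "W \<le> s * d"
    using assms(2-4,6) mult_right_mono[of 1 "exp \<epsilon>" W] by simp_all
  have "(exp (a + \<epsilon>) * (K * m) + (m + K * m * Da) * (\<epsilon> * exp a)) * W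
      = exp a * K * m * (exp \<epsilon> * W) + (1 + K * Da) * (m * \<epsilon> * exp a * W)"
    by (simp add: exp_add algebra_simps)
  also have "\<dots> \<le> exp a * K * m * (s * d) + (2 * K * Da) * (m * \<epsilon> * exp a * (s * d))"
    unfolding W(1) using assms(1,3-5) W(2)
    by (intro add_left_mono mult_mono mult_left_mono) (auto simp: mult.commute)
  also have "\<dots> = (s + 2 * s * \<epsilon> * Da) * K * (d * exp a * m)" by (simp add: algebra_simps)
  finally show ?thesis .
qed

lemma transfer_mem_hcone:
  fixes g :: "'x \<Rightarrow> 'y::metric_space \<Rightarrow> 'y" and \<phi> :: "'x \<times> 'y \<Rightarrow> real"
    and \<alpha> :: real
  defines "Da \<equiv> diameter (UNIV :: 'y set) powr \<alpha>"
  assumes bdd: "bounded (UNIV :: 'y set)" and "0 < \<alpha>"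
    and fibres: "\<And>y. finite (g x -` {y})" "\<And>y. card (g x -` {y}) = d" and "0 < d"
    and matching: "\<And>y y'. \<exists>\<sigma>. bij_betw \<sigma> (g x -` {y}) (g x -` {y'}) \<and>
      (\<Sum>b\<in>g x -` {y}. dist b (\<sigma> b) powr \<alpha>) \<le> W * dist y y' powr \<alpha>"
    and "0 \<le> W"
    and \<phi>_range: "\<And>b. inf_\<phi> \<le> \<phi> (x, b)" "\<And>b. \<phi> (x, b) \<le> inf_\<phi> + \<epsilon>"
    and exp_\<phi>: "\<And>b b'. \<bar>exp (\<phi> (x, b)) - exp (\<phi> (x, b'))\<bar> \<le> \<epsilon> * exp inf_\<phi> * dist b b' powr \<alpha>"
    and "0 \<le> \<epsilon>"
    and s: "s = exp \<epsilon> * W / d" and \<zeta>: "\<zeta> = s + 2 * s * \<epsilon> * Da"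
    and K: "0 < K" "1 / Da \<le> K"
    and \<psi>: "\<psi> \<in> hcone \<alpha> K"
  shows "transfer g \<phi> x \<psi> \<in> hcone \<alpha> (\<zeta> * K)"
proof (cases "\<psi> = (\<lambda>_. 0)")
  case True
  then show ?thesis by (simp add: transfer_def hcone_def)
next
  case False
  define m where "m = Inf (range \<psi>)"
  note bounds = hcone_bounds[OF \<psi> False less_imp_le[OF K(1)] \<open>0 < \<alpha>\<close> bdd, folded m_def Da_def]
  define c where "c = d * exp inf_\<phi> * m"
  define Q where "Q = exp (inf_\<phi> + \<epsilon>) * (K * m) + (m + K * m * Da) * (\<epsilon> * exp inf_\<phi>)"
  have "0 \<le> \<zeta>" "0 \<le> Da" using \<open>0 \<le> W\<close> \<open>0 \<le> \<epsilon>\<close> by (simp_all add: s \<zeta> Da_def)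
  have pair: "\<bar>exp (\<phi> (x, b)) * \<psi> b - exp (\<phi> (x, b')) * \<psi> b'\<bar> \<le> Q * dist b b' powr \<alpha>" for b b'
    unfolding Q_def using \<phi>_range(2) bounds(3,4) exp_\<phi> bounds(1) bounds(2)[of b']
    by (intro weighted_increment_le[where e = "\<lambda>b. exp (\<phi> (x, b))"]) auto
  show ?thesis
    unfolding transfer_eq_sum_vimage[abs_def]
  proof (rule hcone_memI[where c = c])
    show "0 \<le> \<zeta> * K" "0 < c" using \<open>0 \<le> \<zeta>\<close> K(1) \<open>0 < d\<close> bounds(1) by (simp_all add: c_def)
    show "c \<le> (\<Sum>b\<in>g x -` {y}. exp (\<phi> (x, b)) * \<psi> b)" for y
      using sum_bounded_below[of "g x -` {y}" "exp inf_\<phi> * m" "\<lambda>b. exp (\<phi> (x, b)) * \<psi> b"]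
        \<phi>_range(1) bounds(1,2) fibres(2)
      by (simp add: c_def mult_mono less_imp_le mult.assoc)
  next
    fix y y'
    show "\<bar>(\<Sum>b\<in>g x -` {y}. exp (\<phi> (x, b)) * \<psi> b) - (\<Sum>b\<in>g x -` {y'}. exp (\<phi> (x, b)) * \<psi> b)\<bar>
        \<le> \<zeta> * K * c * dist y y' powr \<alpha>"
    proof (cases "y = y'")
      case False
      obtain \<sigma> where \<sigma>: "bij_betw \<sigma> (g x -` {y}) (g x -` {y'})"
        "(\<Sum>b\<in>g x -` {y}. dist b (\<sigma> b) powr \<alpha>) \<le> W * dist y y' powr \<alpha>"
        using matching by blast
      have "0 < dist y y'" using False by simp
      then have "0 < diameter (UNIV :: 'y set)"
        using diameter_bounded_bound[OF bdd UNIV_I UNIV_I, of y y'] by linarith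
      then have "1 \<le> K * Da" using K(2) by (simp add: Da_def divide_le_eq mult.commute)
      then have QW: "Q * W \<le> \<zeta> * K * c"
        unfolding Q_def \<zeta> c_def using bounds(1) \<open>0 < d\<close> \<open>0 \<le> W\<close> \<open>0 \<le> \<epsilon>\<close> s
        by (intro contraction_constant_le) auto
      have "\<bar>(\<Sum>b\<in>g x -` {y}. exp (\<phi> (x, b)) * \<psi> b) - (\<Sum>b\<in>g x -` {y'}. exp (\<phi> (x, b)) * \<psi> b)\<bar>
          \<le> Q * (W * dist y y' powr \<alpha>)"
        using \<sigma> pair bounds(1) K(1) \<open>0 \<le> \<epsilon>\<close> \<open>0 \<le> Da\<close>
        by (intro sum_matched_diff_le[OF \<sigma>(1)]) (auto simp: Q_def)
      also have "\<dots> \<le> \<zeta> * K * c * dist y y' powr \<alpha>"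
        using mult_right_mono[OF QW, of "dist y y' powr \<alpha>"] by (simp add: mult.assoc)
      finally show ?thesis .
    qed simp
  qed
qed

section \<open>Lifting paths through finite covers\<close>

lemma min_geodesic_continuous:
  assumes "min_geodesic dist c l"
  shows "continuous_on {0..l} c"
  unfolding continuous_on_iff
proof (intro ballI allI impI)
  fix s e :: real assume "s \<in> {0..l}" "e > 0"
  then show "\<exists>d>0. \<forall>t\<in>{0..l}. dist t s < d \<longrightarrow> dist (c t) (c s) < e"
    using assms unfolding min_geodesic_def by (intro exI[of _ e]) (auto simp: dist_real_def)
qed

lemma dist_le_of_small_steps:
  fixes p :: "real \<Rightarrow> 'a::metric_space"
  assumes "0 < \<eta>" "0 \<le> l"
    and step: "\<And>s t. 0 \<le> s \<Longrightarrow> s \<le> t \<Longrightarrow> t \<le> l \<Longrightarrow> t - s < \<eta> \<Longrightarrow> dist (p s) (p t) \<le> B * (t - s)"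
  shows "dist (p 0) (p l) \<le> B * l"
proof -
  obtain N :: nat where N: "l / \<eta> < real N" using reals_Archimedean2 by blast
  then have "real N > 0" using assms(1,2) by (smt (verit) divide_nonneg_pos)
  define t where "t k = real k * l / real N" for k :: nat
  have "dist (p 0) (p (t k)) \<le> B * t k" if "k \<le> N" for k
    using that
  proof (induction k)
    case 0
    then show ?case by (simp add: t_def)
  next
    case (Suc k)
    have "real (Suc k) * l \<le> real N * l" using Suc.prems assms(2) by (intro mult_right_mono) auto
    then have "0 \<le> t k" "t k \<le> t (Suc k)" "t (Suc k) \<le> l" "t (Suc k) - t k < \<eta>"
      using assms N \<open>real N > 0\<close> by (auto simp: t_def field_simps)
    then have "dist (p (t k)) (p (t (Suc k))) \<le> B * (t (Suc k) - t k)" by (intro step) auto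
    then show ?case
      using Suc dist_triangle[of "p 0" "p (t (Suc k))" "p (t k)"] by (simp add: algebra_simps)
  qed
  moreover have "t N = l" using \<open>real N > 0\<close> by (simp add: t_def)
  ultimately show ?thesis by (metis order_refl)
qed

definition is_lift :: "('y::topological_space \<Rightarrow> 'z) \<Rightarrow> (real \<Rightarrow> 'z) \<Rightarrow> real \<Rightarrow> 'y \<Rightarrow> (real \<Rightarrow> 'y) \<Rightarrow> bool" where
  "is_lift h c l b p \<longleftrightarrow>
     continuous_on {0..l} p \<and> p 0 = b \<and> (\<forall>s\<in>{0..l}. h (p s) = c s)"

definition path_lift :: "('y::topological_space \<Rightarrow> 'z) \<Rightarrow> (real \<Rightarrow> 'z) \<Rightarrow> real \<Rightarrow> 'y \<Rightarrow> real \<Rightarrow> 'y" where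
  "path_lift h c l b = (SOME p. is_lift h c l b p)"

lemma is_lift_glue:
  assumes "is_lift h c t a p" and "continuous_on {t..t'} q" "q t = p t" "\<forall>s\<in>{t..t'}. h (q s) = c s"
    and "0 \<le> t" "t \<le> t'"
  shows "is_lift h c t' a (\<lambda>s. if s \<le> t then p s else q s)"
proof -
  have "continuous_on {0..t'} (\<lambda>s. if s \<le> t then p s else q s)"
  proof (rule continuous_on_cases_le[where h = "\<lambda>s. s"])
    show "continuous_on {s \<in> {0..t'}. s \<le> t} p"
      using assms(1) unfolding is_lift_def by (rule continuous_on_subset[OF conjunct1]) auto
    show "continuous_on {s \<in> {0..t'}. t \<le> s} q"
      by (rule continuous_on_subset[OF assms(2)]) auto
  qed (use assms(3) in \<open>auto intro: continuous_intros\<close>)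
  then show ?thesis using assms unfolding is_lift_def by auto
qed

locale finite_cover =
  fixes h :: "'y::metric_space \<Rightarrow> 'y" and Lh :: "'y \<Rightarrow> real" and d :: nat
  assumes locally_injective: "\<And>b. \<exists>e>0. inj_on h (ball b e) \<and>
      (\<forall>b1\<in>ball b e. \<forall>b2\<in>ball b e. dist b1 b2 \<le> Lh b * dist (h b1) (h b2))"
    and local_section: "\<And>b. \<exists>e>0. \<exists>G. continuous_on (ball (h b) e) G \<and> G (h b) = b \<and>
      (\<forall>v\<in>ball (h b) e. h (G v) = v)"
    and finite_fibre: "\<And>y. finite (h -` {y})" and card_fibre: "\<And>y. card (h -` {y}) = d"
begin

lemma lifts_agree:
  fixes p1 p2 :: "real \<Rightarrow> 'y"
  assumes "connected I" "continuous_on I p1" "continuous_on I p2"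
    and same_image: "\<forall>t\<in>I. h (p1 t) = h (p2 t)" and "t0 \<in> I" "p1 t0 = p2 t0" and "t \<in> I"
  shows "p1 t = p2 t"
proof -
  define E where "E = {t\<in>I. p1 t = p2 t}"
  have "openin (top_of_set I) E"
    unfolding openin_euclidean_subtopology_iff
  proof (intro conjI ballI)
    fix u assume u: "u \<in> E"
    obtain e where e: "e > 0" "inj_on h (ball (p1 u) e)" using locally_injective by blast
    obtain d1 where d1: "d1 > 0" "\<forall>x'\<in>I. dist x' u < d1 \<longrightarrow> dist (p1 x') (p1 u) < e"
      using assms(2) u e(1) unfolding continuous_on_iff E_def by blast
    obtain d2 where d2: "d2 > 0" "\<forall>x'\<in>I. dist x' u < d2 \<longrightarrow> dist (p2 x') (p2 u) < e"
      using assms(3) u e(1) unfolding continuous_on_iff E_def by blast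
    show "\<exists>e>0. \<forall>x'\<in>I. dist x' u < e \<longrightarrow> x' \<in> E"
    proof (intro exI[of _ "min d1 d2"] conjI ballI impI)
      fix x' assume x': "x' \<in> I" "dist x' u < min d1 d2"
      have "p1 x' \<in> ball (p1 u) e" "p2 x' \<in> ball (p1 u) e"
        using d1 d2 x' u by (auto simp: dist_commute E_def)
      then show "x' \<in> E" using e(2) same_image x' unfolding inj_on_def E_def by auto
    qed (use d1 d2 in auto)
  qed (auto simp: E_def)
  moreover have "closedin (top_of_set I) E"
    unfolding E_def using closedin_continuous_maps_eq[of euclidean "top_of_set I" p1 p2] assms(2,3)
    by simp
  moreover have "t0 \<in> E" using assms(5,6) by (simp add: E_def)
  ultimately have "E = I" using \<open>connected I\<close> unfolding connected_clopen by (metis E_def empty_iff mem_Collect_eq subsetI subset_antisym)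
  then show ?thesis using \<open>t \<in> I\<close> by (auto simp: E_def)
qed

lemma local_lift:
  assumes "continuous_on {0..l} c" "\<tau> \<in> {0..l}" "h b = c \<tau>"
  shows "\<exists>\<epsilon>>0. \<exists>q. continuous_on ({0..l} \<inter> cball \<tau> \<epsilon>) q \<and> q \<tau> = b \<and>
           (\<forall>s\<in>{0..l} \<inter> cball \<tau> \<epsilon>. h (q s) = c s)"
proof -
  obtain e G where e: "e > 0" "continuous_on (ball (h b) e) G" "G (h b) = b"
    "\<forall>v\<in>ball (h b) e. h (G v) = v" using local_section by blast
  obtain \<delta> where \<delta>: "\<delta> > 0" "\<forall>s\<in>{0..l}. dist s \<tau> < \<delta> \<longrightarrow> dist (c s) (c \<tau>) < e"
    using assms(1,2) e(1) unfolding continuous_on_iff by blast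
  have into_ball: "c ` ({0..l} \<inter> cball \<tau> (\<delta>/2)) \<subseteq> ball (h b) e"
    using \<delta> assms(3) by (force simp: dist_commute)
  have "continuous_on ({0..l} \<inter> cball \<tau> (\<delta>/2)) (\<lambda>s. G (c s))"
    by (rule continuous_on_compose2[OF e(2) continuous_on_subset[OF assms(1)] into_ball]) auto
  moreover have "\<forall>s\<in>{0..l} \<inter> cball \<tau> (\<delta>/2). h (G (c s)) = c s" using into_ball e(4) by auto
  ultimately show ?thesis
    using \<delta>(1) e(3) assms(3) by (intro exI[of _ "\<delta>/2"] conjI exI[of _ "\<lambda>s. G (c s)"]) auto
qed

lemma lift_extend_right:
  assumes "continuous_on {0..l} c" "is_lift h c t a p" "0 \<le> t" "t < l"
  shows "\<exists>t'>t. t' \<le> l \<and> (\<exists>p'. is_lift h c t' a p')"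
proof -
  have "h (p t) = c t" using assms(2-4) unfolding is_lift_def by auto
  then obtain \<epsilon> q where q: "\<epsilon> > 0" "continuous_on ({0..l} \<inter> cball t \<epsilon>) q" "q t = p t"
    "\<forall>s\<in>{0..l} \<inter> cball t \<epsilon>. h (q s) = c s"
    using local_lift[OF assms(1), of t "p t"] assms(3,4) by auto
  define t' where "t' = min l (t + \<epsilon>)"
  have "{t..t'} \<subseteq> {0..l} \<inter> cball t \<epsilon>"
    using assms(3) q(1) by (auto simp: t'_def dist_real_def)
  then have "is_lift h c t' a (\<lambda>s. if s \<le> t then p s else q s)"
    using assms(2-4) q by (intro is_lift_glue continuous_on_subset[OF q(2)]) (auto simp: t'_def)
  moreover have "t < t'" "t' \<le> l" using assms(4) q(1) by (auto simp: t'_def)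
  ultimately show ?thesis by blast
qed

text \<open>At the limit point \<open>T\<close> each of the \<open>d\<close> points of the fibre over \<open>c T\<close> has a local lift
  near \<open>T\<close>; these are pairwise distinct at a slightly earlier time \<open>t\<close>, hence exhaust the fibre
  over \<open>c t\<close>, so one of them continues the lift constructed up to \<open>t\<close>.\<close>

lemma lift_at_limit:
  assumes "continuous_on {0..l} c" "h a = c 0" "0 < T" "T \<le> l"
    and below: "\<And>t. 0 \<le> t \<Longrightarrow> t < T \<Longrightarrow> \<exists>p. is_lift h c t a p"
  shows "\<exists>p. is_lift h c T a p"
proof -
  define \<Phi> where "\<Phi> = h -` {c T}"
  have "\<forall>b\<in>\<Phi>. \<exists>\<epsilon> q. \<epsilon> > 0 \<and> continuous_on ({0..l} \<inter> cball T \<epsilon>) q \<and> q T = b \<and>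
           (\<forall>s\<in>{0..l} \<inter> cball T \<epsilon>. h (q s) = c s)"
    using local_lift[OF assms(1), of T] assms(3,4) unfolding \<Phi>_def by auto
  then obtain E Q where EQ: "\<And>b. b \<in> \<Phi> \<Longrightarrow> E b > 0 \<and> continuous_on ({0..l} \<inter> cball T (E b)) (Q b) \<and>
      Q b T = b \<and> (\<forall>s\<in>{0..l} \<inter> cball T (E b). h (Q b s) = c s)" by metis
  have "d > 0"
    using finite_fibre[of "c 0"] card_fibre[of "c 0"] assms(2) card_gt_0_iff by fastforce
  have \<Phi>: "finite \<Phi>" "card \<Phi> = d" using finite_fibre card_fibre by (simp_all add: \<Phi>_def)
  with \<open>d > 0\<close> have "\<Phi> \<noteq> {}" by auto
  define \<epsilon> where "\<epsilon> = Min (E ` \<Phi>)"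
  have \<epsilon>: "\<epsilon> > 0" "\<And>b. b \<in> \<Phi> \<Longrightarrow> \<epsilon> \<le> E b" using \<Phi> \<open>\<Phi> \<noteq> {}\<close> EQ by (auto simp: \<epsilon>_def)
  define t where "t = max 0 (T - \<epsilon> / 2)"
  have t: "0 \<le> t" "t < T" using \<epsilon> assms(3) by (auto simp: t_def)
  have near_T: "{t..T} \<subseteq> {0..l} \<inter> cball T (E b)" if "b \<in> \<Phi>" for b
    using \<epsilon>(2)[OF that] assms(4) t by (auto simp: t_def dist_real_def)
  obtain p where p: "is_lift h c t a p" using below t by blast
  have Q_t: "h (Q b t) = c t" if "b \<in> \<Phi>" for b
    using EQ[OF that] subsetD[OF near_T[OF that], of t] t by auto
  have inj: "inj_on (\<lambda>b. Q b t) \<Phi>"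
  proof (rule inj_onI)
    fix b b' assume bb: "b \<in> \<Phi>" "b' \<in> \<Phi>" "Q b t = Q b' t"
    have "Q b T = Q b' T"
    proof (rule lifts_agree[of "{t..T}"])
      show "continuous_on {t..T} (Q b)"
        by (rule continuous_on_subset[OF _ near_T[OF bb(1)]]) (use EQ[OF bb(1)] in simp)
      show "continuous_on {t..T} (Q b')"
        by (rule continuous_on_subset[OF _ near_T[OF bb(2)]]) (use EQ[OF bb(2)] in simp)
      show "\<forall>s\<in>{t..T}. h (Q b s) = h (Q b' s)"
        using EQ bb near_T[of b] near_T[of b'] by (metis subsetD)
    qed (use bb t in auto)
    then show "b = b'" using EQ bb by auto
  qed
  have "(\<lambda>b. Q b t) ` \<Phi> \<subseteq> h -` {c t}" using Q_t by auto
  then have "(\<lambda>b. Q b t) ` \<Phi> = h -` {c t}"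
    by (rule card_subset_eq[OF finite_fibre]) (use card_image[OF inj] \<Phi>(2) card_fibre in simp)
  moreover have "p t \<in> h -` {c t}" using p t unfolding is_lift_def by auto
  ultimately have "p t \<in> (\<lambda>b. Q b t) ` \<Phi>" by simp
  then obtain b where b: "b \<in> \<Phi>" "Q b t = p t" by (metis imageE)
  have "is_lift h c T a (\<lambda>s. if s \<le> t then p s else Q b s)"
    using EQ[OF b(1)] near_T[OF b(1)] b(2) t p
    by (intro is_lift_glue continuous_on_subset[OF _ near_T[OF b(1)]]) auto
  then show ?thesis by blast
qed

lemma path_lift_exists:
  assumes "continuous_on {0..l} c" "0 \<le> l" "h a = c 0"
  shows "\<exists>p. is_lift h c l a p"
proof -
  define S where "S = {t\<in>{0..l}. \<exists>p. is_lift h c t a p}"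
  have lift_const: "is_lift h c 0 a (\<lambda>_. a)" using assms(3) by (simp add: is_lift_def)
  then have "0 \<in> S" using assms(2) by (auto simp: S_def)
  have "bdd_above S" by (auto simp: S_def bdd_above_def)
  define T where "T = Sup S"
  have T: "0 \<le> T" "T \<le> l"
    using cSup_upper[OF \<open>0 \<in> S\<close> \<open>bdd_above S\<close>] \<open>0 \<in> S\<close> by (auto simp: T_def S_def intro!: cSup_least)
  have restrict: "is_lift h c t a p" if "is_lift h c t' a p" "0 \<le> t" "t \<le> t'" for t t' p
    using that unfolding is_lift_def by (auto intro: continuous_on_subset)
  have "\<exists>p. is_lift h c t a p" if t: "0 \<le> t" "t < T" for t
  proof -
    obtain t' where "t' \<in> S" "t < t'"
      using less_cSup_iff[OF _ \<open>bdd_above S\<close>] \<open>0 \<in> S\<close> t by (auto simp: T_def)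
    then show ?thesis using restrict t by (force simp: S_def)
  qed
  then have "\<exists>p. is_lift h c T a p"
    using lift_at_limit[OF assms(1,3) _ T(2)] lift_const T(1) by (cases "T = 0") auto
  moreover have "T = l"
  proof (rule ccontr)
    assume "T \<noteq> l"
    with T calculation obtain t' where "T < t'" "t' \<le> l" "\<exists>p. is_lift h c t' a p"
      using lift_extend_right[OF assms(1)] by fastforce
    then show False using cSup_upper[OF _ \<open>bdd_above S\<close>, of t'] T by (auto simp: S_def T_def)
  qed
  ultimately show ?thesis by simp
qed

lemma path_lift:
  assumes "continuous_on {0..l} c" "0 \<le> l" "h b = c 0"
  shows "is_lift h c l b (path_lift h c l b)"
  unfolding path_lift_def by (rule someI_ex[OF path_lift_exists[OF assms]])

lemma path_lift_eq_imp_eq: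
  assumes "continuous_on {0..l} c" "0 \<le> l" "h b1 = c 0" "h b2 = c 0"
    and "t \<in> {0..l}" "path_lift h c l b1 t = path_lift h c l b2 t"
  shows "b1 = b2"
proof -
  have "path_lift h c l b1 0 = path_lift h c l b2 0"
    by (rule lifts_agree[of "{0..l}" _ _ t])
      (use path_lift[OF assms(1-3)] path_lift[OF assms(1,2,4)] assms(2,5,6) in \<open>auto simp: is_lift_def\<close>)
  then show ?thesis using path_lift[OF assms(1-3)] path_lift[OF assms(1,2,4)] by (simp add: is_lift_def)
qed

lemma bij_betw_path_lift_end:
  assumes "continuous_on {0..l} c" "0 \<le> l"
  shows "bij_betw (\<lambda>b. path_lift h c l b l) (h -` {c 0}) (h -` {c l})"
proof -
  have inj: "inj_on (\<lambda>b. path_lift h c l b l) (h -` {c 0})"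
    using path_lift_eq_imp_eq[OF assms] assms(2) by (intro inj_onI) auto
  moreover have "(\<lambda>b. path_lift h c l b l) ` (h -` {c 0}) \<subseteq> h -` {c l}"
    using path_lift[OF assms] assms(2) by (auto simp: is_lift_def)
  then have "(\<lambda>b. path_lift h c l b l) ` (h -` {c 0}) = h -` {c l}"
    by (rule card_subset_eq[OF finite_fibre]) (simp add: card_image[OF inj] card_fibre)
  ultimately show ?thesis unfolding bij_betw_def by blast
qed

text \<open>The balls of a Lebesgue number for the cover of \<open>[0, l]\<close> by the local Lipschitz balls
  yield the small steps required by \<open>dist_le_of_small_steps\<close>.\<close>

lemma lift_dist_le:
  fixes p c :: "real \<Rightarrow> 'y"
  assumes "continuous_on {0..l} p" "0 \<le> l" "\<forall>s\<in>{0..l}. h (p s) = c s"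
    and c_lip: "\<forall>s\<in>{0..l}. \<forall>t\<in>{0..l}. dist (c s) (c t) \<le> \<bar>s - t\<bar>"
    and Lh_le: "\<forall>s\<in>{0..l}. Lh (p s) \<le> B" and "0 \<le> B"
  shows "dist (p 0) (p l) \<le> B * l"
proof -
  have "\<exists>e. \<forall>b. e b > 0 \<and>
      (\<forall>b1\<in>ball b (e b). \<forall>b2\<in>ball b (e b). dist b1 b2 \<le> Lh b * dist (h b1) (h b2))"
    using locally_injective by (intro choice) blast
  then obtain e where e: "\<And>b. e b > 0"
    "\<And>b. \<forall>b1\<in>ball b (e b). \<forall>b2\<in>ball b (e b). dist b1 b2 \<le> Lh b * dist (h b1) (h b2)"
    by blast
  have "\<forall>s\<in>{0..l}. \<exists>\<delta>. \<delta> > 0 \<and> (\<forall>u\<in>{0..l}. dist u s < \<delta> \<longrightarrow> dist (p u) (p s) < e (p s))"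
    using assms(1) e(1) unfolding continuous_on_iff by blast
  then have "\<exists>\<delta>. \<forall>s\<in>{0..l}. \<delta> s > 0 \<and>
      (\<forall>u\<in>{0..l}. dist u s < \<delta> s \<longrightarrow> dist (p u) (p s) < e (p s))"
    by (rule bchoice)
  then obtain \<delta> where \<delta>: "\<forall>s\<in>{0..l}. \<delta> s > 0 \<and>
      (\<forall>u\<in>{0..l}. dist u s < \<delta> s \<longrightarrow> dist (p u) (p s) < e (p s))"
    by blast
  obtain \<eta> where \<eta>: "0 < \<eta>"
    "\<And>T. T \<subseteq> {0..l} \<Longrightarrow> diameter T < \<eta> \<Longrightarrow> \<exists>B \<in> (\<lambda>s. ball s (\<delta> s)) ` {0..l}. T \<subseteq> B"
  proof (rule Lebesgue_number_lemma[of "{0..l}" "(\<lambda>s. ball s (\<delta> s)) ` {0..l}"])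
    show "{0..l} \<subseteq> \<Union> ((\<lambda>s. ball s (\<delta> s)) ` {0..l})"
      using \<delta> by (auto intro!: bexI)
  qed (use \<open>0 \<le> l\<close> in auto)
  show ?thesis
  proof (rule dist_le_of_small_steps[OF \<eta>(1) \<open>0 \<le> l\<close>])
    fix s t assume st: "0 \<le> s" "s \<le> t" "t \<le> l" "t - s < \<eta>"
    then obtain r where r: "r \<in> {0..l}" "{s..t} \<subseteq> ball r (\<delta> r)"
      using \<eta>(2)[of "{s..t}"] by auto
    then have "p s \<in> ball (p r) (e (p r))" "p t \<in> ball (p r) (e (p r))"
      using \<delta> st by (auto simp: dist_commute)
    then have "dist (p s) (p t) \<le> Lh (p r) * dist (h (p s)) (h (p t))"
      using e(2) by blast
    also have "\<dots> = Lh (p r) * dist (c s) (c t)" using assms(3) st by simp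
    also have "\<dots> \<le> B * (t - s)"
      using Lh_le r(1) c_lip[rule_format, of s t] st \<open>0 \<le> B\<close> by (intro mult_mono) auto
    finally show "dist (p s) (p t) \<le> B * (t - s)" .
  qed
qed

end

section \<open>Matching the fibres of the skew product\<close>

lemma pdist_Pair_same_fst [simp]: "pdist (x, a) (x, b) = dist a b"
  by (simp add: pdist_def)

lemma pdist_pos: "z \<noteq> w \<Longrightarrow> 0 < pdist z w"
  unfolding pdist_def by (metis add_pos_nonneg add_nonneg_pos prod.expand zero_le_dist zero_less_dist_iff)

lemma pdist_le_diameters:
  assumes "bounded (UNIV :: 'x::metric_space set)" "bounded (UNIV :: 'y::metric_space set)"
  shows "pdist (z :: 'x \<times> 'y) w \<le> diameter (UNIV :: 'x set) + diameter (UNIV :: 'y set)"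
  unfolding pdist_def using assms by (intro add_mono diameter_bounded_bound) auto

lemma sum_if_card_le:
  fixes u v :: real
  assumes "finite A" "card {a\<in>A. P a} \<le> q" "v \<le> u"
  shows "(\<Sum>a\<in>A. if P a then u else v) \<le> (real (card A) - real q) * v + real q * u"
proof -
  define B where "B = {a\<in>A. P a}"
  have "A \<inter> {a. P a} = B" "A \<inter> - {a. P a} = A - B" by (auto simp: B_def)
  moreover have "card (A - B) = card A - card B" "card B \<le> card A"
    using assms(1) by (auto simp: B_def intro: card_Diff_subset card_mono)
  ultimately have "(\<Sum>a\<in>A. if P a then u else v) = real (card B) * u + (real (card A) - real (card B)) * v"
    using assms(1) by (simp add: sum.If_cases of_nat_diff)
  also have "\<dots> \<le> (real (card A) - real q) * v + real q * u"
    using assms(2,3) mult_right_mono[of "real (card B)" "real q" "u - v"] by (simp add: B_def algebra_simps)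
  finally show ?thesis .
qed

locale skew_product =
  fixes f :: "'x::metric_space \<Rightarrow> 'x" and g :: "'x \<Rightarrow> 'y::metric_space \<Rightarrow> 'y"
    and F :: "'x \<times> 'y \<Rightarrow> 'x \<times> 'y" and Lf :: "'x \<times> 'y \<Rightarrow> real"
    and \<gamma> \<delta>f :: real and d :: nat
  assumes F_def: "F = (\<lambda>(x, y). (f x, g x y))"
    and F_lipschitz: "\<exists>C. \<forall>z w. pdist (F z) (F w) \<le> C * pdist z w"
    and F_local_homeo: "local_homeo F"
    and expanding: "1 < \<gamma>" "0 < \<delta>f" "\<forall>x x'. dist x x' \<le> \<delta>f \<longrightarrow> \<gamma> * dist x x' \<le> dist (f x) (f x')"
    and card_fibre: "\<forall>x y. finite {yb. g x yb = y} \<and> card {yb. g x yb = y} = d"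
    and inverse_lipschitz: "\<forall>z. \<exists>U. open U \<and> z \<in> U \<and> inj_on F U \<and>
      (\<forall>w\<in>U. \<forall>w'\<in>U. pdist w w' \<le> Lf z * pdist (F w) (F w'))"
begin

lemma F_apply [simp]: "F (x, y) = (f x, g x y)"
  by (simp add: F_def)

lemma expanding_eq:
  assumes "dist x' x \<le> \<delta>f" "f x' = f x"
  shows "x' = x"
proof -
  have "\<gamma> * dist x' x \<le> 0" using expanding(3) assms by fastforce
  then show ?thesis using expanding(1) by (simp add: mult_le_0_iff)
qed

lemma fibre_locally_injective:
  "\<exists>e>0. inj_on (g x) (ball b e) \<and>
     (\<forall>b1\<in>ball b e. \<forall>b2\<in>ball b e. dist b1 b2 \<le> Lf (x, b) * dist (g x b1) (g x b2))"
proof -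
  obtain U where U: "open U" "(x, b) \<in> U" "inj_on F U"
    "\<forall>w\<in>U. \<forall>w'\<in>U. pdist w w' \<le> Lf (x, b) * pdist (F w) (F w')"
    using inverse_lipschitz by blast
  obtain e where e: "e > 0" "ball (x, b) e \<subseteq> U" using U(1,2) open_contains_ball by blast
  have in_U: "(x, b') \<in> U" if "b' \<in> ball b e" for b'
    using that e(2) by (auto simp: dist_Pair_Pair)
  have "inj_on (g x) (ball b e)"
  proof (rule inj_onI)
    fix b1 b2 assume "b1 \<in> ball b e" "b2 \<in> ball b e" "g x b1 = g x b2"
    then show "b1 = b2" using inj_onD[OF U(3), of "(x, b1)" "(x, b2)"] in_U by auto
  qed
  moreover have "dist b1 b2 \<le> Lf (x, b) * dist (g x b1) (g x b2)" if "b1 \<in> ball b e" "b2 \<in> ball b e" for b1 b2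
    using U(4) in_U[OF that(1)] in_U[OF that(2)] by force
  ultimately show ?thesis using e(1) by blast
qed

text \<open>Near \<open>(x, g x b)\<close> the local inverse of \<open>F\<close> maps \<open>{f x} \<times> Y\<close> into \<open>{x} \<times> Y\<close>,
  because its first component stays \<open>\<delta>f\<close>-close to \<open>x\<close>, where \<open>f\<close> is injective.\<close>

lemma fibre_local_section:
  "\<exists>e>0. \<exists>G. continuous_on (ball (g x b) e) G \<and> G (g x b) = b \<and> (\<forall>v\<in>ball (g x b) e. g x (G v) = v)"
proof -
  obtain U G where "open U" "(x, b) \<in> U" "open (F ` U)" "homeomorphism U (F ` U) F G"
    using F_local_homeo unfolding local_homeo_def by blast
  then have UG: "(x, b) \<in> U" "open (F ` U)" "\<forall>w\<in>U. G (F w) = w" "\<forall>v\<in>F ` U. F (G v) = v"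
    "continuous_on (F ` U) G"
    unfolding homeomorphism_def by auto
  obtain e1 where e1: "e1 > 0" "ball (f x, g x b) e1 \<subseteq> F ` U"
    using UG(1,2) open_contains_ball[of "F ` U"] by force
  obtain e2 where e2: "e2 > 0" "\<forall>v\<in>F ` U. dist v (f x, g x b) < e2 \<longrightarrow> dist (G v) (x, b) < \<delta>f"
    using UG(1,3,5) expanding(2) unfolding continuous_on_iff by (metis F_apply imageI)
  define e where "e = min e1 e2"
  have in_FU: "(f x, v) \<in> F ` U" if "v \<in> ball (g x b) e" for v
    using that e1(2) by (auto simp: e_def dist_Pair_Pair)
  have G_fibre: "G (f x, v) = (x, snd (G (f x, v)))" if v: "v \<in> ball (g x b) e" for v
  proof -
    have "dist (G (f x, v)) (x, b) < \<delta>f"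
      using e2(2) in_FU[OF v] v by (auto simp: e_def dist_Pair_Pair dist_commute)
    then have "dist (fst (G (f x, v))) x \<le> \<delta>f"
      using dist_fst_le[of "G (f x, v)" "(x, b)"] by simp
    moreover have "f (fst (G (f x, v))) = f x"
      using UG(4) in_FU[OF v] by (metis F_apply fst_conv prod.collapse)
    ultimately show ?thesis using expanding_eq by (metis prod.collapse)
  qed
  have "continuous_on (ball (g x b) e) (\<lambda>v. snd (G (f x, v)))"
    by (intro continuous_intros continuous_on_compose2[OF UG(5)]) (use in_FU in auto)
  moreover have "snd (G (f x, g x b)) = b" using UG(1,3) by (metis F_apply snd_conv)
  moreover have "g x (snd (G (f x, v))) = v" if "v \<in> ball (g x b) e" for v
    using UG(4) in_FU[OF that] G_fibre[OF that] by (metis F_apply snd_conv)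
  moreover have "e > 0" using e1 e2 by (simp add: e_def)
  ultimately show ?thesis by blast
qed

lemma fibre_cover: "finite_cover (g x) (\<lambda>b. Lf (x, b)) d"
proof
  show "finite (g x -` {y})" "card (g x -` {y}) = d" for y
    using card_fibre by (simp_all add: vimage_def)
qed (fact fibre_locally_injective fibre_local_section)+

lemma lift_graph_openin:
  assumes geo: "min_geodesic dist c l"
    and p: "continuous_on {0..l} p" "\<forall>s\<in>{0..l}. g x (p s) = c s"
  shows "openin (top_of_set (F -` ((\<lambda>s. (f x, c s)) ` {0..l}))) ((\<lambda>s. (x, p s)) ` {0..l})"
  unfolding openin_euclidean_subtopology_iff
proof (intro conjI ballI)
  interpret finite_cover "g x" "\<lambda>b. Lf (x, b)" d by (rule fibre_cover)
  obtain C where C: "C > 0" "\<And>a a'. dist (g x a) (g x a') \<le> C * dist a a'"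
  proof -
    obtain C0 where "\<forall>z w. pdist (F z) (F w) \<le> C0 * pdist z w" using F_lipschitz by blast
    then have "dist (g x a) (g x a') \<le> (max C0 0 + 1) * dist a a'" for a a'
      by (smt (verit) F_apply mult_right_mono pdist_Pair_same_fst zero_le_dist)
    then show thesis using that[of "max C0 0 + 1"] by simp
  qed
  fix w assume "w \<in> (\<lambda>s. (x, p s)) ` {0..l}"
  then obtain \<tau> where \<tau>: "\<tau> \<in> {0..l}" "w = (x, p \<tau>)" by auto
  obtain e0 where e0: "e0 > 0" "inj_on (g x) (ball (p \<tau>) e0)"
    using locally_injective by blast
  obtain \<delta> where \<delta>: "\<delta> > 0" "\<forall>s\<in>{0..l}. dist s \<tau> < \<delta> \<longrightarrow> dist (p s) (p \<tau>) < e0"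
    using p(1) \<tau>(1) e0(1) unfolding continuous_on_iff by blast
  define e where "e = min \<delta>f (min e0 (\<delta> / C))"
  show "\<exists>e>0. \<forall>w'\<in>F -` ((\<lambda>s. (f x, c s)) ` {0..l}). dist w' w < e \<longrightarrow> w' \<in> (\<lambda>s. (x, p s)) ` {0..l}"
  proof (intro exI[of _ e] conjI ballI impI)
    show "e > 0" using expanding(2) e0(1) \<delta>(1) C(1) by (simp add: e_def)
    fix w' assume w': "w' \<in> F -` ((\<lambda>s. (f x, c s)) ` {0..l})" "dist w' w < e"
    obtain x' b' where xb: "w' = (x', b')" by (cases w')
    obtain s where s: "s \<in> {0..l}" "f x' = f x" "g x' b' = c s" using w'(1) xb by auto
    have "dist x' x \<le> \<delta>f" "dist b' (p \<tau>) < e"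
      using dist_fst_le[of w' w] dist_snd_le[of w' w] xb \<tau>(2) w'(2) by (auto simp: e_def)
    then have x': "x' = x" and b': "dist b' (p \<tau>) < e" using expanding_eq s(2) by auto
    have "\<bar>s - \<tau>\<bar> = dist (g x b') (g x (p \<tau>))"
      using geo s \<tau>(1) p(2) x' unfolding min_geodesic_def by auto
    also have "\<dots> \<le> C * dist b' (p \<tau>)" by (rule C(2))
    also have "\<dots> < \<delta>" using b' C(1) by (simp add: e_def field_simps)
    finally have "dist (p s) (p \<tau>) < e0" using \<delta>(2) s(1) by (simp add: dist_real_def)
    moreover have "b' \<in> ball (p \<tau>) e0" using b' by (simp add: e_def dist_commute)
    moreover have "g x b' = g x (p s)" using s x' p(2) by simp
    ultimately have "b' = p s" using inj_onD[OF e0(2)] by (simp add: dist_commute)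
    then show "w' \<in> (\<lambda>s. (x, p s)) ` {0..l}" using xb x' s(1) by auto
  qed
qed (use p(2) in force)

text \<open>The graph of a lift is compact and relatively open in the preimage, hence contains every
  component it meets.\<close>

lemma component_subset_lift_graph:
  assumes geo: "min_geodesic dist c l"
    and p: "continuous_on {0..l} p" "\<forall>s\<in>{0..l}. g x (p s) = c s"
    and C: "C \<in> components (F -` ((\<lambda>s. (f x, c s)) ` {0..l}))"
    and meets: "C \<inter> (\<lambda>s. (x, p s)) ` {0..l} \<noteq> {}"
  shows "C \<subseteq> (\<lambda>s. (x, p s)) ` {0..l}"
proof -
  define K where "K = (\<lambda>s. (x, p s)) ` {0..l}"
  obtain V where V: "open V" "K = F -` ((\<lambda>s. (f x, c s)) ` {0..l}) \<inter> V"
    using lift_graph_openin[OF assms(1-3)] unfolding openin_open K_def by blast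
  have "C \<subseteq> F -` ((\<lambda>s. (f x, c s)) ` {0..l})" "connected C"
    using in_components_subset[OF C] in_components_connected[OF C] by auto
  then have "openin (top_of_set C) (C \<inter> K)" using V by (auto simp: openin_open)
  moreover have "compact K" unfolding K_def
    by (rule compact_continuous_image) (use p(1) in \<open>auto intro: continuous_intros\<close>)
  then have "closedin (top_of_set C) (C \<inter> K)" by (intro closedin_closed_Int compact_imp_closed)
  ultimately show ?thesis
    using \<open>connected C\<close> meets unfolding connected_clopen K_def by blast
qed

text \<open>\<open>U\<close> meets only one component of the preimage of the geodesic, and that component lies in
  the graph of a single lift.\<close>

lemma lifts_meeting_same_set_eq:
  assumes geo: "min_geodesic dist c l"
    and one_component: "\<forall>c l. min_geodesic pdist c l \<longrightarrow>
      (\<forall>C1\<in>components (F -` (c ` {0..l})). \<forall>C2\<in>components (F -` (c ` {0..l})).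
         C1 \<inter> U \<noteq> {} \<longrightarrow> C2 \<inter> U \<noteq> {} \<longrightarrow> C1 = C2)"
    and fibres: "g x b = c 0" "g x b' = c 0" and s: "s \<in> {0..l}" "s' \<in> {0..l}"
    and in_U: "(x, path_lift (g x) c l b s) \<in> U" "(x, path_lift (g x) c l b' s') \<in> U"
  shows "b = b'"
proof -
  interpret finite_cover "g x" "\<lambda>b. Lf (x, b)" d by (rule fibre_cover)
  define P where "P b = path_lift (g x) c l b" for b
  define S where "S = F -` ((\<lambda>s. (f x, c s)) ` {0..l})"
  define w where "w = (x, P b s)"
  define w' where "w' = (x, P b' s')"
  have c: "continuous_on {0..l} c" "0 \<le> l"
    using geo min_geodesic_continuous unfolding min_geodesic_def by auto
  have lift: "continuous_on {0..l} (P b)" "\<forall>s\<in>{0..l}. g x (P b s) = c s" if "g x b = c 0" for b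
    using path_lift[OF c, of b] that by (auto simp: P_def is_lift_def)
  have "w \<in> S" "w' \<in> S" using s lift(2) fibres by (auto simp: S_def w_def w'_def)
  then have comps: "connected_component_set S w \<in> components S" "connected_component_set S w' \<in> components S"
    and mem: "w \<in> connected_component_set S w" "w' \<in> connected_component_set S w'"
    by (simp_all add: componentsI)
  have geo_F: "min_geodesic pdist (\<lambda>s. (f x, c s)) l"
    using geo unfolding min_geodesic_def by simp
  have "w \<in> U" "w' \<in> U" using in_U by (simp_all add: w_def w'_def P_def)
  then have same: "connected_component_set S w = connected_component_set S w'"
    using mem by (intro one_component[rule_format, OF geo_F, folded S_def] comps) blast+
  have "connected_component_set S w \<subseteq> (\<lambda>s. (x, P b s)) ` {0..l}"
  proof (rule component_subset_lift_graph[OF geo lift[OF fibres(1)], folded S_def, OF comps(1)])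
    have "w \<in> (\<lambda>s. (x, P b s)) ` {0..l}" using s(1) by (auto simp: w_def)
    then show "connected_component_set S w \<inter> (\<lambda>s. (x, P b s)) ` {0..l} \<noteq> {}"
      using mem(1) by blast
  qed
  then have "w' \<in> (\<lambda>s. (x, P b s)) ` {0..l}" using same mem(2) by blast
  then obtain r where r: "r \<in> {0..l}" "P b' s' = P b r" by (auto simp: w'_def)
  then have "c s' = c r" using lift(2)[OF fibres(1)] lift(2)[OF fibres(2)] s(2) by force
  moreover have "dist (c s') (c r) = \<bar>s' - r\<bar>"
    using geo s(2) r(1) unfolding min_geodesic_def by blast
  ultimately have "s' = r" by simp
  then show "b = b'"
    using path_lift_eq_imp_eq[OF c, of b b' r] fibres r by (simp add: P_def)
qed

lemma card_lifts_meeting_le: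
  assumes geo: "min_geodesic dist c l"
    and \<V>: "finite \<V>" "\<A> \<subseteq> \<Union>\<V>"
    and one_component: "\<forall>U\<in>\<V>. \<forall>c l. min_geodesic pdist c l \<longrightarrow>
      (\<forall>C1\<in>components (F -` (c ` {0..l})). \<forall>C2\<in>components (F -` (c ` {0..l})).
         C1 \<inter> U \<noteq> {} \<longrightarrow> C2 \<inter> U \<noteq> {} \<longrightarrow> C1 = C2)"
  shows "card {b \<in> g x -` {c 0}. \<exists>s\<in>{0..l}. (x, path_lift (g x) c l b s) \<in> \<A>} \<le> card \<V>"
proof -
  define P where "P b = path_lift (g x) c l b" for b
  define Bad where "Bad = {b \<in> g x -` {c 0}. \<exists>s\<in>{0..l}. (x, P b s) \<in> \<A>}"
  have "\<forall>b\<in>Bad. \<exists>sU. fst sU \<in> {0..l} \<and> snd sU \<in> \<V> \<and> (x, P b (fst sU)) \<in> snd sU"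
    using \<V>(2) unfolding Bad_def by fastforce
  then have "\<exists>sU. \<forall>b\<in>Bad. fst (sU b) \<in> {0..l} \<and> snd (sU b) \<in> \<V> \<and> (x, P b (fst (sU b))) \<in> snd (sU b)"
    by (rule bchoice)
  then obtain sU where sU: "\<forall>b\<in>Bad. fst (sU b) \<in> {0..l} \<and> snd (sU b) \<in> \<V> \<and> (x, P b (fst (sU b))) \<in> snd (sU b)"
    by blast
  have "inj_on (\<lambda>b. snd (sU b)) Bad"
  proof (rule inj_onI)
    fix b b' assume "b \<in> Bad" "b' \<in> Bad" "snd (sU b) = snd (sU b')"
    then have "g x b = c 0" "g x b' = c 0" "fst (sU b) \<in> {0..l}" "fst (sU b') \<in> {0..l}"
      "snd (sU b) \<in> \<V>" "(x, P b (fst (sU b))) \<in> snd (sU b)" "(x, P b' (fst (sU b'))) \<in> snd (sU b)"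
      using sU by (auto simp: Bad_def)
    then show "b = b'"
      using lifts_meeting_same_set_eq[OF geo bspec[OF one_component]] by (simp add: P_def)
  qed
  moreover have "(\<lambda>b. snd (sU b)) ` Bad \<subseteq> \<V>" using sU by auto
  ultimately have "card Bad \<le> card \<V>" using card_inj_on_le \<V>(1) by blast
  then show ?thesis by (simp add: Bad_def P_def)
qed

lemma dist_path_lift_end_le:
  assumes geo: "min_geodesic dist c l" and "g x b = c 0"
    and L: "1 \<le> L" "\<forall>z\<in>\<A>. Lf z \<le> L" "\<forall>z. z \<notin> \<A> \<longrightarrow> Lf z < 1 / \<gamma>"
  shows "dist b (path_lift (g x) c l b l)
    \<le> (if \<exists>s\<in>{0..l}. (x, path_lift (g x) c l b s) \<in> \<A> then L else 1 / \<gamma>) * l"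
proof -
  interpret finite_cover "g x" "\<lambda>b. Lf (x, b)" d by (rule fibre_cover)
  define P where "P = path_lift (g x) c l b"
  define B where "B = (if \<exists>s\<in>{0..l}. (x, P s) \<in> \<A> then L else 1 / \<gamma>)"
  have c: "continuous_on {0..l} c" "0 \<le> l"
    using geo min_geodesic_continuous unfolding min_geodesic_def by auto
  have lift: "is_lift (g x) c l b P" using path_lift[OF c] assms(2) by (simp add: P_def)
  have "1 / \<gamma> < 1" using expanding(1) by simp
  then have \<gamma>: "0 < 1 / \<gamma>" "1 / \<gamma> \<le> L" using expanding(1) L(1) by (simp, linarith)
  have "Lf (x, P s) \<le> B" if "s \<in> {0..l}" for s
    using that L(2) L(3)[rule_format, of "(x, P s)"] \<gamma>(2)
    by (cases "(x, P s) \<in> \<A>") (auto simp: B_def)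
  then have "dist (P 0) (P l) \<le> B * l"
    using lift c geo \<gamma> L(1) unfolding is_lift_def min_geodesic_def
    by (intro lift_dist_le) (auto simp: B_def)
  then show ?thesis using lift by (simp add: is_lift_def P_def B_def)
qed

lemma fibre_matching:
  assumes Y_geodesic: "geodesic_space (dist :: 'y \<Rightarrow> 'y \<Rightarrow> real)"
    and L: "1 \<le> L" "\<forall>z\<in>\<A>. Lf z \<le> L" "\<forall>z. z \<notin> \<A> \<longrightarrow> Lf z < 1 / \<gamma>"
    and \<U>: "finite \<U>" "\<exists>\<V>\<subseteq>\<U>. card \<V> = q \<and> \<A> \<subseteq> \<Union>\<V>"
    and one_component: "\<forall>U\<in>\<U>. \<forall>c l. min_geodesic pdist c l \<longrightarrow>
      (\<forall>C1\<in>components (F -` (c ` {0..l})). \<forall>C2\<in>components (F -` (c ` {0..l})).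
         C1 \<inter> U \<noteq> {} \<longrightarrow> C2 \<inter> U \<noteq> {} \<longrightarrow> C1 = C2)"
    and "0 < \<alpha>"
  shows "\<exists>\<sigma>. bij_betw \<sigma> (g x -` {y}) (g x -` {y'}) \<and>
     (\<Sum>b\<in>g x -` {y}. dist b (\<sigma> b) powr \<alpha>)
        \<le> ((real d - real q) * \<gamma> powr (-\<alpha>) + real q * L powr \<alpha>) * dist y y' powr \<alpha>"
proof -
  interpret finite_cover "g x" "\<lambda>b. Lf (x, b)" d by (rule fibre_cover)
  obtain c l where geo: "min_geodesic dist c l" "c 0 = y" "c l = y'"
    using Y_geodesic unfolding geodesic_space_def by blast
  have c: "continuous_on {0..l} c" "0 \<le> l"
    using geo(1) min_geodesic_continuous unfolding min_geodesic_def by auto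
  have "l = dist y y'" using geo c(2) unfolding min_geodesic_def by force
  define P where "P b = path_lift (g x) c l b" for b
  define bad where "bad b \<longleftrightarrow> (\<exists>s\<in>{0..l}. (x, P b s) \<in> \<A>)" for b
  have "bij_betw (\<lambda>b. P b l) (g x -` {y}) (g x -` {y'})"
    using bij_betw_path_lift_end[OF c] geo(2,3) by (simp add: P_def)
  have "0 < 1 / \<gamma>" "1 / \<gamma> \<le> 1" using expanding(1) by simp_all
  with L(1) have "1 / \<gamma> \<le> L" by linarith
  have step: "dist b (P b l) powr \<alpha> \<le> (if bad b then L powr \<alpha> else \<gamma> powr (-\<alpha>)) * l powr \<alpha>"
    if "b \<in> g x -` {y}" for b
  proof -
    have "dist b (P b l) powr \<alpha> \<le> ((if bad b then L else 1 / \<gamma>) * l) powr \<alpha>"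
      using dist_path_lift_end_le[OF geo(1) _ L, where b = b] that geo(2) \<open>0 < \<alpha>\<close>
      by (intro powr_mono2) (auto simp: P_def bad_def)
    also have "\<dots> = (if bad b then L powr \<alpha> else \<gamma> powr (-\<alpha>)) * l powr \<alpha>"
      using expanding(1) L(1) c(2) by (cases "bad b") (simp_all add: powr_mult powr_minus_divide powr_divide)
    finally show ?thesis .
  qed
  obtain \<V> where \<V>: "\<V> \<subseteq> \<U>" "card \<V> = q" "\<A> \<subseteq> \<Union>\<V>" using \<U>(2) by blast
  have "\<forall>U\<in>\<V>. \<forall>c l. min_geodesic pdist c l \<longrightarrow>
      (\<forall>C1\<in>components (F -` (c ` {0..l})). \<forall>C2\<in>components (F -` (c ` {0..l})).
         C1 \<inter> U \<noteq> {} \<longrightarrow> C2 \<inter> U \<noteq> {} \<longrightarrow> C1 = C2)"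
    using one_component \<V>(1) by blast
  then have card_bad: "card {b \<in> g x -` {y}. bad b} \<le> q"
    using card_lifts_meeting_le[OF geo(1) finite_subset[OF \<V>(1) \<U>(1)] \<V>(3)] \<V>(2) geo(2)
    by (simp add: bad_def P_def)
  have "\<gamma> powr (-\<alpha>) = (1 / \<gamma>) powr \<alpha>" using expanding(1) by (simp add: powr_minus_divide powr_divide)
  also have "\<dots> \<le> L powr \<alpha>" using \<open>0 < 1 / \<gamma>\<close> \<open>1 / \<gamma> \<le> L\<close> \<open>0 < \<alpha>\<close> by (intro powr_mono2) auto
  finally have sum_bad: "(\<Sum>b\<in>g x -` {y}. if bad b then L powr \<alpha> else \<gamma> powr (-\<alpha>))
      \<le> (real d - real q) * \<gamma> powr (-\<alpha>) + real q * L powr \<alpha>"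
    using sum_if_card_le[OF finite_fibre card_bad] card_fibre by simp
  have "(\<Sum>b\<in>g x -` {y}. dist b (P b l) powr \<alpha>)
      \<le> (\<Sum>b\<in>g x -` {y}. (if bad b then L powr \<alpha> else \<gamma> powr (-\<alpha>)) * l powr \<alpha>)"
    by (rule sum_mono) (rule step)
  also have "\<dots> \<le> ((real d - real q) * \<gamma> powr (-\<alpha>) + real q * L powr \<alpha>) * l powr \<alpha>"
    unfolding sum_distrib_right[symmetric] using sum_bad by (rule mult_right_mono) simp
  finally show ?thesis using \<open>bij_betw _ _ _\<close> \<open>l = dist y y'\<close> by blast
qed

end

section \<open>The cone contraction\<close>

lemma potential_bounds:
  fixes \<phi> :: "'x::metric_space \<times> 'y::metric_space \<Rightarrow> real"
  assumes "bounded (UNIV :: 'x set)" "bounded (UNIV :: 'y set)" "holder \<alpha> pdist \<phi>" "0 < \<alpha>"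
    and oscillation: "Sup (range \<phi>) - Inf (range \<phi>) < \<epsilon>"
    and exp_holder: "holder_semi \<alpha> pdist (\<lambda>z. exp (\<phi> z)) < \<epsilon> * exp (Inf (range \<phi>))"
  shows "\<And>z. Inf (range \<phi>) \<le> \<phi> z" "\<And>z. \<phi> z \<le> Inf (range \<phi>) + \<epsilon>"
    "\<And>x b b'. \<bar>exp (\<phi> (x, b)) - exp (\<phi> (x, b'))\<bar> \<le> \<epsilon> * exp (Inf (range \<phi>)) * dist b b' powr \<alpha>"
proof -
  have bdd: "bdd_above (range \<phi>)" "bdd_below (range \<phi>)"
    using holder_bdd_range[OF assms(3) pdist_le_diameters[OF assms(1,2)] _ assms(4)]
    by (simp_all add: pdist_def)
  show lower: "Inf (range \<phi>) \<le> \<phi> z" for z using bdd(2) by (simp add: cInf_lower)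
  show upper: "\<phi> z \<le> Inf (range \<phi>) + \<epsilon>" for z
    using cSup_upper[OF _ bdd(1), of "\<phi> z"] oscillation by simp
  fix x b b'
  have "\<bar>exp (\<phi> (x, b)) - exp (\<phi> (x, b'))\<bar>
      \<le> holder_semi \<alpha> pdist (\<lambda>z. exp (\<phi> z)) * pdist (x, b) (x, b') powr \<alpha>"
    by (rule holder_semi_bound[OF holder_exp[OF assms(3) upper] pdist_pos]) (simp_all add: pdist_def)
  also have "\<dots> \<le> \<epsilon> * exp (Inf (range \<phi>)) * dist b b' powr \<alpha>"
    using less_imp_le[OF exp_holder] by (simp add: mult_right_mono)
  finally show "\<bar>exp (\<phi> (x, b)) - exp (\<phi> (x, b'))\<bar> \<le> \<epsilon> * exp (Inf (range \<phi>)) * dist b b' powr \<alpha>" .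
qed

theorem lemma3p3:
  fixes f :: "'x::metric_space \<Rightarrow> 'x"
    and g :: "'x \<Rightarrow> 'y::metric_space \<Rightarrow> 'y"
    and \<phi> :: "'x \<times> 'y \<Rightarrow> real"
    and Lf :: "'x \<times> 'y \<Rightarrow> real"
    and \<A> :: "('x \<times> 'y) set"
    and \<U> :: "('x \<times> 'y) set set"
    and d q :: nat
    and \<gamma> \<delta>f L \<alpha> \<epsilon> s \<zeta> :: real
  defines "F \<equiv> (\<lambda>(x, y). (f x, g x y))"
  assumes X: "compact (UNIV :: 'x set)" "connected (UNIV :: 'x set)" "geodesic_space (dist :: 'x \<Rightarrow> 'x \<Rightarrow> real)"
    and Y: "compact (UNIV :: 'y set)" "connected (UNIV :: 'y set)" "geodesic_space (dist :: 'y \<Rightarrow> 'y \<Rightarrow> real)"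
    and F_lip: "\<exists>C. \<forall>z w. pdist (F z) (F w) \<le> C * pdist z w"
    and F_lh: "local_homeo F"
    and f_exp: "1 < \<gamma>" "0 < \<delta>f" "\<forall>x x'. dist x x' \<le> \<delta>f \<longrightarrow> \<gamma> * dist x x' \<le> dist (f x) (f x')"
    and g_deg: "\<forall>x y. finite {yb. g x yb = y} \<and> card {yb. g x yb = y} = d"
    and Lf_cont: "continuous_on UNIV Lf"
    and Lf_inv: "\<forall>z. \<exists>U. open U \<and> z \<in> U \<and> inj_on F U \<and>
                   (\<forall>w\<in>U. \<forall>w'\<in>U. pdist w w' \<le> Lf z * pdist (F w) (F w'))"
    and A1: "1 \<le> L" "open \<A>" "\<forall>z\<in>\<A>. Lf z \<le> L" "\<forall>z. z \<notin> \<A> \<longrightarrow> Lf z < 1 / \<gamma>"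
    and A2: "finite \<U>" "\<forall>U\<in>\<U>. open U \<and> inj_on F U" "\<Union>\<U> = UNIV"
            "\<exists>\<V>\<subseteq>\<U>. card \<V> = q \<and> \<A> \<subseteq> \<Union>\<V>" "q < d"
            "\<forall>U\<in>\<U>. \<forall>c l. min_geodesic pdist c l \<longrightarrow>
                (\<forall>C1\<in>components (F -` (c ` {0..l})). \<forall>C2\<in>components (F -` (c ` {0..l})).
                   C1 \<inter> U \<noteq> {} \<longrightarrow> C2 \<inter> U \<noteq> {} \<longrightarrow> C1 = C2)"
    and alpha: "0 < \<alpha>" "\<alpha> < 1"
    and phi_holder: "holder \<alpha> pdist \<phi>"
    and eps: "0 < \<epsilon>"
    and s_def: "s = exp \<epsilon> * ((real d - real q) * \<gamma> powr (- \<alpha>) + real q * L powr \<alpha>) / real d"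
    and s_lt: "s < 1"
    and zeta_def: "\<zeta> = s + 2 * s * \<epsilon> * diameter (UNIV :: 'y set) powr \<alpha>"
    and zeta_lt: "\<zeta> < 1"
    and P: "Sup (range \<phi>) - Inf (range \<phi>) < \<epsilon>"
           "holder_semi \<alpha> pdist (\<lambda>z. exp (\<phi> z)) < \<epsilon> * exp (Inf (range \<phi>))"
  shows "\<exists>K0>0. \<forall>K\<ge>K0.
           (\<forall>x. \<forall>\<psi>\<in>hcone \<alpha> K. transfer g \<phi> x \<psi> \<in> hcone \<alpha> (\<zeta> * K)) \<and>
           (\<exists>M::real. \<forall>x. \<forall>\<psi>1\<in>transfer g \<phi> x ` hcone \<alpha> K. \<forall>\<psi>2\<in>transfer g \<phi> x ` hcone \<alpha> K.
               \<psi>1 \<noteq> (\<lambda>_. 0) \<longrightarrow> \<psi>2 \<noteq> (\<lambda>_. 0) \<longrightarrow>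
               hilbert_metric (hcone \<alpha> K) \<psi>1 \<psi>2 \<le> ereal M)"
proof -
  interpret skew_product f g F Lf \<gamma> \<delta>f d
    using F_lip F_lh f_exp g_deg Lf_inv by unfold_locales (simp_all add: F_def)
  have bdd: "bounded (UNIV :: 'x set)" "bounded (UNIV :: 'y set)" using X(1) Y(1) by (simp_all add: compact_imp_bounded)
  note \<phi> = potential_bounds[OF bdd phi_holder alpha(1) P]
  have W: "0 < (real d - real q) * \<gamma> powr (- \<alpha>) + real q * L powr \<alpha>"
    using A2(5) f_exp(1) by (simp add: add_pos_nonneg)
  then have "0 < \<zeta>" using A2(5) eps by (simp add: zeta_def s_def add_pos_nonneg)
  define K0 where "K0 = 1 + 1 / diameter (UNIV :: 'y set) powr \<alpha>"
  have K0: "0 < K0" "\<And>K. K0 \<le> K \<Longrightarrow> 0 < K" "\<And>K. K0 \<le> K \<Longrightarrow> 1 / diameter (UNIV :: 'y set) powr \<alpha> \<le> K"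
  proof -
    have "0 \<le> 1 / diameter (UNIV :: 'y set) powr \<alpha>" by simp
    then show "0 < K0" "\<And>K. K0 \<le> K \<Longrightarrow> 0 < K"
      "\<And>K. K0 \<le> K \<Longrightarrow> 1 / diameter (UNIV :: 'y set) powr \<alpha> \<le> K"
      unfolding K0_def by linarith+
  qed
  have cone: "transfer g \<phi> x \<psi> \<in> hcone \<alpha> (\<zeta> * K)" if "K0 \<le> K" "\<psi> \<in> hcone \<alpha> K" for K x \<psi>
  proof (rule transfer_mem_hcone[OF bdd(2) alpha(1) _ _ _ _ less_imp_le[OF W] _ _ _ _ s_def zeta_def
        K0(2,3)[OF that(1)] that(2)])
    show "\<exists>\<sigma>. bij_betw \<sigma> (g x -` {y}) (g x -` {y'}) \<and> (\<Sum>b\<in>g x -` {y}. dist b (\<sigma> b) powr \<alpha>)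
        \<le> ((real d - real q) * \<gamma> powr (- \<alpha>) + real q * L powr \<alpha>) * dist y y' powr \<alpha>" for y y'
      by (rule fibre_matching[OF Y(3) A1(1,3,4) A2(1,4,6) alpha(1)])
  qed (use \<phi> A2(5) eps finite_cover.finite_fibre[OF fibre_cover] finite_cover.card_fibre[OF fibre_cover]
      in auto)
  have diameter_bound: "\<exists>M::real. \<forall>x. \<forall>\<psi>1\<in>transfer g \<phi> x ` hcone \<alpha> K. \<forall>\<psi>2\<in>transfer g \<phi> x ` hcone \<alpha> K.
      \<psi>1 \<noteq> (\<lambda>_. 0) \<longrightarrow> \<psi>2 \<noteq> (\<lambda>_. 0) \<longrightarrow> hilbert_metric (hcone \<alpha> K) \<psi>1 \<psi>2 \<le> ereal M"
    if "K0 \<le> K" for K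
    using cone[OF that] K0(2)[OF that] \<open>0 < \<zeta>\<close> zeta_lt alpha(1) bdd(2)
    by (blast intro: hilbert_metric_hcone_le)
  show ?thesis using K0(1) cone diameter_bound by blast
qed

end
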